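(* A finite sequence $i_1i_2\dots i_n$ of symbols from $\{1,2,\dots,N\}$ is stable if and only if it can be reduced to the empty sequence by a finite number of operations of the following types: (a) transposing two adjacent blocks of consecutive terms, each block consisting of two symbols (i.e. replacing $\dots ab\,cd\dots$ by $\dots cd\,ab\dots$); (b) deleting a block of two consecutive identical symbols.
   Context: A sequence $i_1i_2\dots i_n$ of symbols is stable if its terms can be partitioned into disjoint pairs of identical symbols, with one term of each pair at an odd position and the other at an even position; equivalently, $n$ is even and the formal alternating sum $i_1-i_2+\dots+i_{n-1}-i_n$ vanishes as a formal sum of symbols. *)

theory Defs
  imports Main
begin

text \<open>A sequence i_1 ... i_n is represented as a list xs, with term i_(k+1) = xs ! k.
  Position k+1 is odd iff list index k is even.  Stability: the terms can be partitioned
  into disjoint pairs of identical symbols, one at an odd and one at an even position,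
  i.e. there is a bijection from the odd positions onto the even positions that preserves
  the symbol.\<close>

definition stable :: "'a list \<Rightarrow> bool" where
  "stable xs \<longleftrightarrow>
     (\<exists>f. bij_betw f {k. k < length xs \<and> even k} {k. k < length xs \<and> odd k}
          \<and> (\<forall>k. k < length xs \<and> even k \<longrightarrow> xs ! (f k) = xs ! k))"

inductive reduce_step :: "'a list \<Rightarrow> 'a list \<Rightarrow> bool" where
  swap: "reduce_step (u @ [a, b, c, d] @ v) (u @ [c, d, a, b] @ v)"
| cancel: "reduce_step (u @ [a, a] @ v) (u @ v)"

end

theory Submission
  imports Defs "HOL-Library.Multiset"
begin

text \<open>Stability says that the multiset of terms at odd positions equals the multiset of terms
  at even positions.  Both kinds of reduction step preserve this balance: a swap moves blocks
  of even length, and a cancellation removes one term from each side.  Conversely, in a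
  balanced sequence the first term reappears at some even position; moving the block of two
  ending there to the front by swaps puts two copies of it next to each other, and cancelling
  them gives a shorter balanced sequence.\<close>

fun even_terms :: "'a list \<Rightarrow> 'a multiset" and odd_terms :: "'a list \<Rightarrow> 'a multiset" where
  "even_terms [] = {#}"
| "even_terms (x # xs) = add_mset x (odd_terms xs)"
| "odd_terms [] = {#}"
| "odd_terms (x # xs) = even_terms xs"

text \<open>The names refer to 0-based list indices: even_terms collects the terms at the odd
  positions 1, 3, 5, ... of the paper.\<close>

lemma even_odd_terms_append:
  "even_terms (xs @ ys) =
     (if even (length xs) then even_terms xs + even_terms ys else even_terms xs + odd_terms ys) \<and>
   odd_terms (xs @ ys) =
     (if even (length xs) then odd_terms xs + odd_terms ys else odd_terms xs + even_terms ys)"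
  by (induction xs) auto

lemma even_terms_append:
  "even_terms (xs @ ys) =
     (if even (length xs) then even_terms xs + even_terms ys else even_terms xs + odd_terms ys)"
  using even_odd_terms_append by blast

lemma odd_terms_append:
  "odd_terms (xs @ ys) =
     (if even (length xs) then odd_terms xs + odd_terms ys else odd_terms xs + even_terms ys)"
  using even_odd_terms_append by blast

lemma mem_odd_terms_split:
  "a \<in># odd_terms xs \<Longrightarrow> \<exists>u c v. xs = u @ c # a # v \<and> even (length u)"
proof (induction xs rule: induct_list012)
  case (3 x y zs)
  show ?case
  proof (cases "a = y")
    case True
    then show ?thesis by (intro exI[of _ "[]"]) auto
  next
    case False
    with "3.prems" obtain u c v where "zs = u @ c # a # v" "even (length u)"
      using "3.IH"(1) by auto
    then show ?thesis by (intro exI[of _ "x # y # u"]) auto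
  qed
qed simp_all

abbreviation balanced :: "'a list \<Rightarrow> bool" where
  "balanced xs \<equiv> even_terms xs = odd_terms xs"

lemma reduce_step_balanced_iff: "reduce_step xs ys \<Longrightarrow> balanced xs \<longleftrightarrow> balanced ys"
  by (induction rule: reduce_step.induct)
     (auto simp: even_terms_append odd_terms_append add_ac add_mset_commute)

lemma reduce_steps_balanced_iff: "reduce_step\<^sup>*\<^sup>* xs ys \<Longrightarrow> balanced xs \<longleftrightarrow> balanced ys"
  by (induction rule: rtranclp_induct) (auto dest: reduce_step_balanced_iff)

lemma image_mset_nth_Cons_Suc:
  "finite A \<Longrightarrow> image_mset (nth (x # xs)) (mset_set (Suc ` A)) = image_mset (nth xs) (mset_set A)"
  by (simp add: image_mset_mset_set[symmetric] multiset.map_comp comp_def)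

lemma image_mset_nth_positions:
  "image_mset (nth xs) (mset_set {k. k < length xs \<and> even k}) = even_terms xs \<and>
   image_mset (nth xs) (mset_set {k. k < length xs \<and> odd k}) = odd_terms xs"
proof (induction xs)
  case Nil
  show ?case by simp
next
  case (Cons x xs)
  have "{k. k < length (x # xs) \<and> even k} = insert 0 (Suc ` {k. k < length xs \<and> odd k})"
    by (auto simp: image_iff) (metis Suc_less_eq even_Suc gr0_conv_Suc not_gr0)
  moreover have "{k. k < length (x # xs) \<and> odd k} = Suc ` {k. k < length xs \<and> even k}"
    by (auto simp: image_iff elim: oddE)
  ultimately show ?case
    using Cons by (simp add: image_mset_nth_Cons_Suc)
qed

lemma image_mset_eq_imp_bij_betw:
  assumes "finite A" "finite B" "image_mset g (mset_set A) = image_mset g (mset_set B)"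
  shows "\<exists>f. bij_betw f A B \<and> (\<forall>x\<in>A. g (f x) = g x)"
  using assms
proof (induction A arbitrary: B rule: finite_induct)
  case empty
  then show ?case by (simp add: mset_set_empty_iff bij_betw_def)
next
  case (insert a A B)
  have "g a \<in># image_mset g (mset_set (insert a A))" using insert.hyps(1) by simp
  then have "g a \<in> g ` B" unfolding insert.prems(2) using insert.prems(1) by simp
  then obtain b where b: "b \<in> B" "g b = g a" by (metis imageE)
  have "image_mset g (mset_set A) = image_mset g (mset_set (B - {b}))"
    using insert b by (simp add: mset_set.remove)
  then obtain f where f: "bij_betw f A (B - {b})" "\<forall>x\<in>A. g (f x) = g x"
    using insert by blast
  have "bij_betw (f(a := b)) A (B - {b})"
    using f(1) insert.hyps(2) by (subst bij_betw_cong[where g = f]) auto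
  then have "bij_betw (f(a := b)) (A \<union> {a}) ((B - {b}) \<union> {b})"
    using notIn_Un_bij_betw3[of a A "f(a := b)" "B - {b}"] insert.hyps(2) by simp
  moreover have "A \<union> {a} = insert a A" "(B - {b}) \<union> {b} = B"
    using b(1) by auto
  ultimately show ?case
    using f(2) b insert.hyps(2) by auto
qed

lemma stable_imp_balanced:
  assumes "stable xs"
  shows "balanced xs"
proof -
  let ?E = "{k. k < length xs \<and> even k}"
  obtain f where f: "bij_betw f ?E {k. k < length xs \<and> odd k}" "\<forall>k\<in>?E. xs ! f k = xs ! k"
    using assms unfolding stable_def by auto
  have "odd_terms xs = image_mset (nth xs) (image_mset f (mset_set ?E))"
    using image_mset_nth_positions[of xs] f(1)
    by (simp add: bij_betw_def image_mset_mset_set)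
  also have "\<dots> = image_mset (nth xs) (mset_set ?E)"
    unfolding multiset.map_comp comp_def using f(2) by (intro image_mset_cong) auto
  finally show ?thesis
    using image_mset_nth_positions[of xs] by simp
qed

lemma balanced_imp_stable:
  assumes "balanced xs"
  shows "stable xs"
proof -
  let ?E = "{k. k < length xs \<and> even k}" and ?O = "{k. k < length xs \<and> odd k}"
  have "image_mset (nth xs) (mset_set ?E) = image_mset (nth xs) (mset_set ?O)"
    using assms image_mset_nth_positions[of xs] by simp
  then show ?thesis
    unfolding stable_def using image_mset_eq_imp_bij_betw[of ?E ?O "nth xs"] by auto
qed

lemma reduce_step_Cons: "reduce_step xs ys \<Longrightarrow> reduce_step (x # xs) (x # ys)"
  by (induction rule: reduce_step.induct) (metis append_Cons reduce_step.intros)+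

lemma reduce_steps_Cons: "reduce_step\<^sup>*\<^sup>* xs ys \<Longrightarrow> reduce_step\<^sup>*\<^sup>* (x # xs) (x # ys)"
  by (induction rule: rtranclp_induct) (auto intro: rtranclp.rtrancl_into_rtrancl reduce_step_Cons)

lemma reduce_steps_pair_to_front:
  "even (length u) \<Longrightarrow> reduce_step\<^sup>*\<^sup>* (u @ c # d # v) (c # d # u @ v)"
proof (induction u rule: induct_list012)
  case (3 x y u)
  then have "reduce_step\<^sup>*\<^sup>* (x # y # u @ c # d # v) (x # y # c # d # u @ v)"
    by (simp add: reduce_steps_Cons)
  moreover have "reduce_step (x # y # c # d # u @ v) (c # d # x # y # u @ v)"
    using reduce_step.swap[of "[]" x y c d "u @ v"] by simp
  ultimately show ?case by simp
qed simp_all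

lemma balanced_reduces_to_shorter:
  assumes "balanced xs" "xs \<noteq> []"
  obtains ys where "reduce_step\<^sup>*\<^sup>* xs ys" "length ys + 2 = length xs"
proof -
  obtain a rest where xs: "xs = a # rest" using assms(2) by (cases xs) auto
  have "a \<in># even_terms xs" using xs by simp
  then have "a \<in># odd_terms xs" using assms(1) by simp
  then obtain u c v where split: "xs = u @ c # a # v" "even (length u)"
    by (blast dest: mem_odd_terms_split)
  then have to_front: "reduce_step\<^sup>*\<^sup>* xs (c # a # u @ v)"
    using reduce_steps_pair_to_front by simp
  show thesis
  proof (cases u)
    case Nil
    then have "reduce_step (c # a # u @ v) v"
      using reduce_step.cancel[of "[]" a v] split(1) xs by simp
    then show thesis
      using that[of v] split(1) Nil by auto
  next
    case (Cons a' u')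
    with split obtain b w where u: "u = a # b # w"
      using xs by (cases u') auto
    have "reduce_step (c # a # u @ v) (c # b # w @ v)"
      using reduce_step.cancel[of "[c]" a "b # w @ v"] u by simp
    with to_front have "reduce_step\<^sup>*\<^sup>* xs (c # b # w @ v)"
      by (rule rtranclp.rtrancl_into_rtrancl)
    then show thesis
      using that split(1) u by simp
  qed
qed

lemma balanced_reduces_to_Nil: "balanced xs \<Longrightarrow> reduce_step\<^sup>*\<^sup>* xs []"
proof (induction "length xs" arbitrary: xs rule: less_induct)
  case less
  show ?case
  proof (cases "xs = []")
    case False
    then obtain ys where ys: "reduce_step\<^sup>*\<^sup>* xs ys" "length ys + 2 = length xs"
      using balanced_reduces_to_shorter less.prems by blast
    then have "reduce_step\<^sup>*\<^sup>* ys []"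
      using less reduce_steps_balanced_iff by fastforce
    with ys(1) show ?thesis by simp
  qed simp
qed

theorem lemma3p2:
  fixes N :: nat and xs :: "nat list"
  assumes "set xs \<subseteq> {1..N}"
  shows "stable xs \<longleftrightarrow> reduce_step\<^sup>*\<^sup>* xs []"
proof
  assume "stable xs"
  then show "reduce_step\<^sup>*\<^sup>* xs []"
    by (intro balanced_reduces_to_Nil stable_imp_balanced)
next
  assume "reduce_step\<^sup>*\<^sup>* xs []"
  then have "balanced xs"
    using reduce_steps_balanced_iff by fastforce
  then show "stable xs"
    by (rule balanced_imp_stable)
qed

end
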